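(* Write $\forall^*x\,\phi$ for $\sim\exists x\sim\phi$ and $\phi\to^*\psi$ for $\sim(\phi\wedge\sim\psi)$. Let $\bar x=(x_1,\dots,x_n)$, let $\bar y$ be a tuple of fresh variables, let $\psi(\bar x,\bar y)$ be an $\mathrm{FO}(\perp\!\!\!\perp_c,\sim)$-formula, and set $\phi_\exists:=\exists\bar y(\bar x\perp\!\!\!\perp\bar y\wedge\psi(\bar x,\bar y))$ and $\phi_\forall:=\forall^*\bar y(\bar x\perp\!\!\!\perp\bar y\to^*\psi(\bar x,\bar y))$. Then for every finite structure $\mathcal A$ and every probabilistic team $\mathbb X$ over $\{x_1,\dots,x_n\}$: (i) $\mathcal A\models_{\mathbb X}\phi_\exists$ iff $\mathcal A\models_{\mathbb X(d/\bar y)}\psi$ for some probability distribution $d\colon A^{|\bar y|}\to[0,1]$; (ii) $\mathcal A\models_{\mathbb X}\phi_\forall$ iff $\mathcal A\models_{\mathbb X(d/\bar y)}\psi$ for all probability distributions $d\colon A^{|\bar y|}\to[0,1]$. Here $\mathbb X(d/\bar y)$ is the team $s(\bar a/\bar y)\mapsto\mathbb X(s)\cdot d(\bar a)$ ($s\in X$, $\bar a\in A^{|\bar y|}$).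
   Context: Probabilistic team semantics. Fix a finite relational vocabulary $\tau$ containing $=$; structures $\mathcal A$ are finite $\tau$-structures with universe $A$. An assignment over a finite set $D$ of first-order variables is a map $s\colon D\to A$; $s(a/x)$ maps $x$ to $a$ and agrees with $s$ elsewhere. A probabilistic team over $D$ is a function $\mathbb X\colon X\to[0,1]$ with $\sum_{s\in X}\mathbb X(s)=1$, where $X$ is a finite set of assignments over $D$ (zero weights allowed); $\mathrm{supp}(\mathbb X)=\{s:\mathbb X(s)\neq0\}$. For a tuple $\bar x$ and $\bar a\in A^{|\bar x|}$, $|\mathbb X_{\bar x=\bar a}|=\sum_{s\in X,\,s(\bar x)=\bar a}\mathbb X(s)$. For $F$ mapping each $t\in X$ to a probability distribution $F(t)$ on $A$, $\mathbb X(F/x)(s(a/x))=\sum_{t\in X,\ t(a/x)=s(a/x)}\mathbb X(t)\,F(t)(a)$; for a tuple $\bar y$ one applies this variable by variable; $\mathbb X(A/x)$ is $\mathbb X(F/x)$ with every $F(t)$ uniform on $A$. For $k\in[0,1]$, $\mathbb Y\sqcup_k\mathbb Z$ is $s\mapsto k\mathbb Y(s)+(1-k)\mathbb Z(s)$. Syntax of $\mathrm{FO}(\perp\!\!\!\perp_c,\sim)$: $\phi::=R(\bar x)\mid\neg R(\bar x)\mid \bar y\perp\!\!\!\perp_{\bar x}\bar z\mid\sim\phi\mid\phi\wedge\phi\mid\phi\vee\phi\mid\exists x\phi\mid\forall x\phi$. Semantics: literals hold in $\mathbb X$ iff every $s\in\mathrm{supp}(\mathbb X)$ satisfies them; $\bar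 y\perp\!\!\!\perp_{\bar x}\bar z$ holds iff $|\mathbb X_{\bar x\bar y=s(\bar x\bar y)}|\cdot|\mathbb X_{\bar x\bar z=s(\bar x\bar z)}|=|\mathbb X_{\bar x\bar y\bar z=s(\bar x\bar y\bar z)}|\cdot|\mathbb X_{\bar x=s(\bar x)}|$ for all $s\colon\mathrm{Var}(\bar x\bar y\bar z)\to A$; the marginal independence atom $\bar x\perp\!\!\!\perp\bar y$ is the case of empty conditioning tuple; $\sim\phi$ holds iff $\phi$ does not; $\wedge$ is classical; $\phi\vee\psi$ holds in $\mathbb X$ iff $\phi$ holds in $\mathbb Y$ and $\psi$ in $\mathbb Z$ for some $\mathbb Y,\mathbb Z,k$ with $\mathbb Y\sqcup_k\mathbb Z=\mathbb X$; $\exists x\phi$ holds in $\mathbb X$ iff $\phi$ holds in $\mathbb X(F/x)$ for some $F$; $\forall x\phi$ holds in $\mathbb X$ iff $\phi$ holds in $\mathbb X(A/x)$. *)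

theory Defs
  imports "HOL-Probability.Probability"
begin

(* Formulas of FO(indep_c, ~). Equality literals are explicit constructors
   (the vocabulary contains =). Indep cs ys zs is  ys _||_{cs} zs . *)
datatype ('v, 'r) fml =
    Rel 'r "'v list"
  | NRel 'r "'v list"
  | Eq 'v 'v
  | NEq 'v 'v
  | Indep "'v list" "'v list" "'v list"
  | Tilde "('v, 'r) fml"
  | And "('v, 'r) fml" "('v, 'r) fml"
  | Or "('v, 'r) fml" "('v, 'r) fml"
  | Ex 'v "('v, 'r) fml"
  | All 'v "('v, 'r) fml"

primrec fv :: "('v, 'r) fml \<Rightarrow> 'v set" where
  "fv (Rel r xs) = set xs"
| "fv (NRel r xs) = set xs"
| "fv (Eq x y) = {x, y}"
| "fv (NEq x y) = {x, y}"
| "fv (Indep cs ys zs) = set cs \<union> set ys \<union> set zs"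
| "fv (Tilde \<phi>) = fv \<phi>"
| "fv (And \<phi> \<psi>) = fv \<phi> \<union> fv \<psi>"
| "fv (Or \<phi> \<psi>) = fv \<phi> \<union> fv \<psi>"
| "fv (Ex x \<phi>) = fv \<phi> - {x}"
| "fv (All x \<phi>) = fv \<phi> - {x}"

(* Assignments are partial maps; a probabilistic team over D (in a structure
   with universe A) is a finitely supported distribution on assignments
   with domain D and values in A. Zero-weight assignments play no role. *)
type_synonym ('v, 'a) team = "('v \<rightharpoonup> 'a) pmf"

definition team_on :: "'a set \<Rightarrow> 'v set \<Rightarrow> ('v, 'a) team \<Rightarrow> bool" where
  "team_on A D X \<longleftrightarrow> (\<forall>s\<in>set_pmf X. dom s = D \<and> ran s \<subseteq> A)"

definition wt :: "('v, 'a) team \<Rightarrow> 'v list \<Rightarrow> ('v \<Rightarrow> 'a) \<Rightarrow> real" where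
  "wt X vs s = measure_pmf.prob X {t. \<forall>v\<in>set vs. t v = Some (s v)}"

definition supp_x :: "('v, 'a) team \<Rightarrow> 'v \<Rightarrow> (('v \<rightharpoonup> 'a) \<Rightarrow> 'a pmf) \<Rightarrow> ('v, 'a) team" where
  "supp_x X x F = bind_pmf X (\<lambda>t. map_pmf (\<lambda>a. t(x \<mapsto> a)) (F t))"

primrec sat :: "'a set \<Rightarrow> ('r \<Rightarrow> 'a list \<Rightarrow> bool) \<Rightarrow> 'v set \<Rightarrow> ('v, 'a) team \<Rightarrow> ('v, 'r) fml \<Rightarrow> bool" where
  "sat A I D X (Rel r xs) = (\<forall>s\<in>set_pmf X. I r (map (\<lambda>v. the (s v)) xs))"
| "sat A I D X (NRel r xs) = (\<forall>s\<in>set_pmf X. \<not> I r (map (\<lambda>v. the (s v)) xs))"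
| "sat A I D X (Eq x y) = (\<forall>s\<in>set_pmf X. the (s x) = the (s y))"
| "sat A I D X (NEq x y) = (\<forall>s\<in>set_pmf X. the (s x) \<noteq> the (s y))"
| "sat A I D X (Indep cs ys zs) =
     (\<forall>s. (\<forall>v. s v \<in> A) \<longrightarrow>
        wt X (cs @ ys) s * wt X (cs @ zs) s = wt X (cs @ ys @ zs) s * wt X cs s)"
| "sat A I D X (Tilde \<phi>) = (\<not> sat A I D X \<phi>)"
| "sat A I D X (And \<phi> \<psi>) = (sat A I D X \<phi> \<and> sat A I D X \<psi>)"
| "sat A I D X (Or \<phi> \<psi>) =
     (\<exists>Y Z k. 0 \<le> k \<and> k \<le> 1 \<and> team_on A D Y \<and> team_on A D Z \<and>
        (\<forall>s. pmf X s = k * pmf Y s + (1 - k) * pmf Z s) \<and>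
        sat A I D Y \<phi> \<and> sat A I D Z \<psi>)"
| "sat A I D X (Ex x \<phi>) =
     (\<exists>F. (\<forall>t\<in>set_pmf X. set_pmf (F t) \<subseteq> A) \<and> sat A I (insert x D) (supp_x X x F) \<phi>)"
| "sat A I D X (All x \<phi>) = sat A I (insert x D) (supp_x X x (\<lambda>_. pmf_of_set A)) \<phi>"

definition ForallStar :: "'v \<Rightarrow> ('v, 'r) fml \<Rightarrow> ('v, 'r) fml" where
  "ForallStar x \<phi> = Tilde (Ex x (Tilde \<phi>))"

definition ImpStar :: "('v, 'r) fml \<Rightarrow> ('v, 'r) fml \<Rightarrow> ('v, 'r) fml" where
  "ImpStar \<phi> \<psi> = Tilde (And \<phi> (Tilde \<psi>))"

definition Exs :: "'v list \<Rightarrow> ('v, 'r) fml \<Rightarrow> ('v, 'r) fml" where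
  "Exs ys \<phi> = foldr Ex ys \<phi>"

definition ForallStars :: "'v list \<Rightarrow> ('v, 'r) fml \<Rightarrow> ('v, 'r) fml" where
  "ForallStars ys \<phi> = foldr ForallStar ys \<phi>"

definition phi_ex :: "'v list \<Rightarrow> 'v list \<Rightarrow> ('v, 'r) fml \<Rightarrow> ('v, 'r) fml" where
  "phi_ex xs ys \<psi> = Exs ys (And (Indep [] xs ys) \<psi>)"

definition phi_all :: "'v list \<Rightarrow> 'v list \<Rightarrow> ('v, 'r) fml \<Rightarrow> ('v, 'r) fml" where
  "phi_all xs ys \<psi> = ForallStars ys (ImpStar (Indep [] xs ys) \<psi>)"

definition distr_on :: "'a set \<Rightarrow> nat \<Rightarrow> 'a list pmf \<Rightarrow> bool" where
  "distr_on A k d \<longleftrightarrow> (\<forall>as\<in>set_pmf d. length as = k \<and> set as \<subseteq> A)"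

definition team_subst :: "('v, 'a) team \<Rightarrow> 'v list \<Rightarrow> 'a list pmf \<Rightarrow> ('v, 'a) team" where
  "team_subst X ys d = bind_pmf X (\<lambda>s. map_pmf (\<lambda>as. s(ys [\<mapsto>] as)) d)"

end

theory Submission
  imports Defs
begin

text \<open>Existentially quantifying the fresh variables \<open>ys\<close> amounts to choosing a kernel: each
  assignment of \<open>X\<close> draws its values for \<open>ys\<close> from a distribution of its own. Since an
  assignment in \<open>X\<close> is determined by its values on \<open>xs\<close>, the atom \<open>xs \<bottom> ys\<close> holds exactly
  when the joint law of assignment and drawn values is a product, i.e.\ when the kernel is
  (on the support) constant, equal to its average \<open>d\<close>; the team is then \<open>X(d/ys)\<close>. Conversely
  every constant kernel makes \<open>xs\<close> and \<open>ys\<close> independent. The universal statement is the dual: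
  \<open>\<forall>*ys (xs \<bottom> ys \<rightarrow>* \<psi>)\<close> is the negation of \<open>\<exists>ys (xs \<bottom> ys \<and> \<sim>\<psi>)\<close>.\<close>

lemma measure_pmf_prob_cong:
  assumes "\<And>x. x \<in> set_pmf M \<Longrightarrow> x \<in> E \<longleftrightarrow> x \<in> E'"
  shows "measure_pmf.prob M E = measure_pmf.prob M E'"
proof -
  have "E \<inter> set_pmf M = E' \<inter> set_pmf M"
    using assms by blast
  then show ?thesis
    by (metis measure_Int_set_pmf)
qed

lemma measure_pair_pmf_Times:
  "measure_pmf.prob (pair_pmf M N) (E \<times> E') = measure_pmf.prob M E * measure_pmf.prob N E'"
proof -
  have "measure_pmf.prob (pair_pmf M N) (E \<times> E') =
        measure_pmf.prob (pair_pmf M N) ((E \<inter> set_pmf M) \<times> (E' \<inter> set_pmf N))"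
    by (rule measure_pmf_prob_cong) auto
  also have "\<dots> = measure_pmf.prob M (E \<inter> set_pmf M) * measure_pmf.prob N (E' \<inter> set_pmf N)"
    by (intro measure_pmf_prob_product countable_subset[OF _ countable_set_pmf]) auto
  finally show ?thesis
    by (simp add: measure_Int_set_pmf)
qed

lemma eq_pair_pmfI:
  assumes "map_pmf fst J = M" and "map_pmf snd J = N"
    and "\<And>a b. a \<in> set_pmf M \<Longrightarrow> b \<in> set_pmf N \<Longrightarrow> pmf J (a, b) = pmf M a * pmf N b"
  shows "J = pair_pmf M N"
proof (rule pmf_eqI)
  fix p :: "'a \<times> 'b"
  obtain a b where p: "p = (a, b)"
    by fastforce
  show "pmf J p = pmf (pair_pmf M N) p"
  proof (cases "a \<in> set_pmf M \<and> b \<in> set_pmf N")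
    case True
    then show ?thesis using assms(3) by (simp add: p pmf_pair)
  next
    case False
    have "fst ` set_pmf J = set_pmf M" and "snd ` set_pmf J = set_pmf N"
      unfolding assms(1,2)[symmetric] by simp_all
    with False have "p \<notin> set_pmf J"
      by (force simp: p)
    with False show ?thesis
      by (auto simp: p pmf_pair set_pmf_iff)
  qed
qed

lemma bind_hd_cond_pmf_tl:
  assumes "[] \<notin> set_pmf q"
  shows "bind_pmf (map_pmf hd q) (\<lambda>a. map_pmf (Cons a) (map_pmf tl (cond_pmf q {l. hd l = a}))) = q"
proof -
  have "map_pmf (Cons a) (map_pmf tl (cond_pmf q {l. hd l = a})) = cond_pmf q {l. hd l = a}"
    if "a \<in> set_pmf (map_pmf hd q)" for a
  proof -
    from that have ne: "set_pmf q \<inter> {l. hd l = a} \<noteq> {}" by auto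
    have "map_pmf (Cons a) (map_pmf tl (cond_pmf q {l. hd l = a})) = map_pmf id (cond_pmf q {l. hd l = a})"
      unfolding map_pmf_comp using assms ne
      by (intro map_pmf_cong) (auto simp: set_cond_pmf[OF ne], metis hd_Cons_tl)
    then show ?thesis by simp
  qed
  then have "bind_pmf (map_pmf hd q) (\<lambda>a. map_pmf (Cons a) (map_pmf tl (cond_pmf q {l. hd l = a})))
      = bind_pmf (map_pmf hd q) (\<lambda>a. cond_pmf q {l. hd l = a})"
    by (intro bind_pmf_cong) auto
  also have "\<dots> = q"
    by (rule bind_cond_pmf_cancel) (auto simp: vimage_def eq_commute)
  finally show ?thesis .
qed

lemma map_upds_eq_Some_iff:
  assumes "distinct ys" and "length as = length ys"
  shows "(\<forall>v\<in>set ys. (m(ys [\<mapsto>] as)) v = Some (f v)) \<longleftrightarrow> as = map f ys"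
  using assms
proof (induction ys arbitrary: as m)
  case (Cons y ys)
  then obtain a as' where "as = a # as'" by (cases as) auto
  with Cons show ?case by auto
qed simp

lemma ex_valuation_extending:
  assumes "a0 \<in> A" and "ran s \<subseteq> A" and "set as \<subseteq> A"
    and "distinct ys" and "length as = length ys" and "set ys \<inter> dom s = {}"
  obtains f where "\<forall>v. f v \<in> A" and "\<forall>v\<in>dom s. s v = Some (f v)" and "map f ys = as"
proof
  let ?m = "s ++ map_of (zip ys as)"
  define f where "f v = (case ?m v of Some b \<Rightarrow> b | None \<Rightarrow> a0)" for v
  have disj: "dom s \<inter> dom (map_of (zip ys as)) = {}"
    using assms(5,6) by auto
  then have "ran ?m \<subseteq> A"
    using assms(2-5) by (simp add: ran_map_add ran_map_of_zip)
  then show "\<forall>v. f v \<in> A"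
    using assms(1) unfolding f_def by (metis option.case_eq_if option.collapse ranI subsetD)
  show "\<forall>v\<in>dom s. s v = Some (f v)"
  proof
    fix v assume v: "v \<in> dom s"
    with disj have "map_of (zip ys as) v = None" by auto
    with v show "s v = Some (f v)" by (auto simp: f_def map_add_def)
  qed
  show "map f ys = as"
    using assms(4,5) by (auto simp: f_def map_add_def map_of_zip_nth intro: nth_equalityI)
qed

lemma team_on_eq_if_agree:
  assumes "team_on A D X" and "s \<in> set_pmf X" and "s' \<in> set_pmf X"
    and "\<forall>v\<in>D. s' v = s v"
  shows "s' = s"
proof
  fix v
  have "dom s = D" and "dom s' = D"
    using assms(1-3) by (auto simp: team_on_def)
  then show "s' v = s v"
    using assms(4) by (metis domIff)
qed

lemma team_on_supp_x:
  assumes "team_on A D X" and "\<forall>s\<in>set_pmf X. set_pmf (F s) \<subseteq> A"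
  shows "team_on A (insert y D) (supp_x X y F)"
  using assms by (auto simp: team_on_def supp_x_def ran_def)

definition kernel_subst ::
    "('v, 'a) team \<Rightarrow> 'v list \<Rightarrow> (('v \<rightharpoonup> 'a) \<Rightarrow> 'a list pmf) \<Rightarrow> ('v, 'a) team" where
  "kernel_subst X ys K = bind_pmf X (\<lambda>s. map_pmf (\<lambda>as. s(ys [\<mapsto>] as)) (K s))"

lemma team_subst_eq_kernel_subst: "team_subst X ys d = kernel_subst X ys (\<lambda>_. d)"
  by (simp add: team_subst_def kernel_subst_def)

lemma kernel_subst_Nil: "kernel_subst X [] K = X"
  by (simp add: kernel_subst_def map_pmf_const bind_return_pmf')

lemma kernel_subst_supp_x:
  "kernel_subst (supp_x X y F) ys K =
   kernel_subst X (y # ys) (\<lambda>s. bind_pmf (F s) (\<lambda>a. map_pmf (Cons a) (K (s(y \<mapsto> a)))))"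
  by (simp add: kernel_subst_def supp_x_def map_bind_pmf bind_assoc_pmf bind_map_pmf map_pmf_comp)

lemma kernel_subst_Cons_decompose:
  assumes y: "\<forall>s\<in>set_pmf X. y \<notin> dom s"
    and K: "\<forall>s\<in>set_pmf X. distr_on A (Suc n) (K s)"
  obtains F K' where "\<forall>s\<in>set_pmf X. set_pmf (F s) \<subseteq> A"
    and "\<forall>t\<in>set_pmf (supp_x X y F). distr_on A n (K' t)"
    and "kernel_subst X (y # ys) K = kernel_subst (supp_x X y F) ys K'"
proof
  define F where "F s = map_pmf hd (K s)" for s
  define K' where "K' t = map_pmf tl (cond_pmf (K (t(y := None))) {l. hd l = the (t y)})" for t
  have restore: "s(y \<mapsto> a, y := None) = s" "s(y := None) = s" if "s \<in> set_pmf X" for s a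
    using y that by (auto simp: fun_eq_iff domIff)
  have factor: "K s = bind_pmf (F s) (\<lambda>a. map_pmf (Cons a) (K' (s(y \<mapsto> a))))" if s: "s \<in> set_pmf X" for s
  proof -
    have "[] \<notin> set_pmf (K s)"
      using K s by (fastforce simp: distr_on_def)
    then show ?thesis
      by (simp add: F_def K'_def restore[OF s] bind_hd_cond_pmf_tl)
  qed
  show "kernel_subst X (y # ys) K = kernel_subst (supp_x X y F) ys K'"
    unfolding kernel_subst_supp_x unfolding kernel_subst_def
    by (rule bind_pmf_cong[OF refl]) (simp add: factor)
  show "\<forall>s\<in>set_pmf X. set_pmf (F s) \<subseteq> A"
    using K by (fastforce simp: F_def distr_on_def neq_Nil_conv length_Suc_conv)
  show "\<forall>t\<in>set_pmf (supp_x X y F). distr_on A n (K' t)"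
  proof
    fix t assume "t \<in> set_pmf (supp_x X y F)"
    then obtain s a where s: "s \<in> set_pmf X" and a: "a \<in> set_pmf (F s)" and t: "t = s(y \<mapsto> a)"
      by (auto simp: supp_x_def)
    have ne: "set_pmf (K s) \<inter> {l. hd l = a} \<noteq> {}"
      using a by (auto simp: F_def)
    show "distr_on A n (K' t)"
      using K s by (fastforce simp: K'_def t restore[OF s] set_cond_pmf[OF ne] distr_on_def length_Suc_conv)
  qed
qed

lemma sat_Exs_iff_kernel:
  assumes "distinct ys" and "set ys \<inter> D = {}" and "team_on A D X"
  shows "sat A I D X (Exs ys \<theta>) \<longleftrightarrow>
    (\<exists>K. (\<forall>s\<in>set_pmf X. distr_on A (length ys) (K s)) \<and>
         sat A I (D \<union> set ys) (kernel_subst X ys K) \<theta>)"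
  using assms
proof (induction ys arbitrary: D X)
  case Nil
  show ?case
    by (auto simp: Exs_def kernel_subst_Nil distr_on_def intro!: exI[of _ "\<lambda>_. return_pmf []"])
next
  case (Cons y ys)
  then have yD: "y \<notin> D" and D: "insert y D \<union> set ys = D \<union> set (y # ys)" by auto
  have "sat A I D X (Exs (y # ys) \<theta>) \<longleftrightarrow>
    (\<exists>F. (\<forall>s\<in>set_pmf X. set_pmf (F s) \<subseteq> A) \<and>
       (\<exists>K'. (\<forall>t\<in>set_pmf (supp_x X y F). distr_on A (length ys) (K' t)) \<and>
          sat A I (D \<union> set (y # ys)) (kernel_subst (supp_x X y F) ys K') \<theta>))"
    using Cons.IH[of "insert y D"] Cons.prems team_on_supp_x[OF Cons.prems(3)]
    by (simp add: Exs_def D) blast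
  also have "\<dots> \<longleftrightarrow> (\<exists>K. (\<forall>s\<in>set_pmf X. distr_on A (length (y # ys)) (K s)) \<and>
       sat A I (D \<union> set (y # ys)) (kernel_subst X (y # ys) K) \<theta>)"
  proof
    assume "\<exists>F. (\<forall>s\<in>set_pmf X. set_pmf (F s) \<subseteq> A) \<and>
       (\<exists>K'. (\<forall>t\<in>set_pmf (supp_x X y F). distr_on A (length ys) (K' t)) \<and>
          sat A I (D \<union> set (y # ys)) (kernel_subst (supp_x X y F) ys K') \<theta>)"
    then obtain F K' where "\<forall>s\<in>set_pmf X. set_pmf (F s) \<subseteq> A"
      and "\<forall>t\<in>set_pmf (supp_x X y F). distr_on A (length ys) (K' t)"
      and "sat A I (D \<union> set (y # ys)) (kernel_subst (supp_x X y F) ys K') \<theta>"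
      by blast
    then show "\<exists>K. (\<forall>s\<in>set_pmf X. distr_on A (length (y # ys)) (K s)) \<and>
       sat A I (D \<union> set (y # ys)) (kernel_subst X (y # ys) K) \<theta>"
      unfolding kernel_subst_supp_x by (intro exI conjI) (auto simp: distr_on_def supp_x_def)
  next
    assume "\<exists>K. (\<forall>s\<in>set_pmf X. distr_on A (length (y # ys)) (K s)) \<and>
       sat A I (D \<union> set (y # ys)) (kernel_subst X (y # ys) K) \<theta>"
    moreover have "\<forall>s\<in>set_pmf X. y \<notin> dom s"
      using Cons.prems(3) yD by (auto simp: team_on_def)
    ultimately show "\<exists>F. (\<forall>s\<in>set_pmf X. set_pmf (F s) \<subseteq> A) \<and>
       (\<exists>K'. (\<forall>t\<in>set_pmf (supp_x X y F). distr_on A (length ys) (K' t)) \<and>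
          sat A I (D \<union> set (y # ys)) (kernel_subst (supp_x X y F) ys K') \<theta>)"
      by (metis kernel_subst_Cons_decompose length_Cons)
  qed
  finally show ?case .
qed

lemma kernel_subst_eq_map_pmf:
  "kernel_subst X ys K =
   map_pmf (\<lambda>(s, as). s(ys [\<mapsto>] as)) (bind_pmf X (\<lambda>s. map_pmf (Pair s) (K s)))"
  by (simp add: kernel_subst_def map_bind_pmf map_pmf_comp)

lemma team_subst_eq_map_pmf:
  "team_subst X ys d = map_pmf (\<lambda>(s, as). s(ys [\<mapsto>] as)) (pair_pmf X d)"
  by (simp add: team_subst_def pair_pmf_def map_bind_pmf map_pmf_def bind_assoc_pmf bind_return_pmf)

lemma wt_map_upds_pmf:
  fixes J :: "(('v \<rightharpoonup> 'a) \<times> 'a list) pmf"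
  assumes "distinct ys" and "set ys \<inter> set xs = {}"
    and "\<forall>p\<in>set_pmf J. length (snd p) = length ys"
  shows "wt (map_pmf (\<lambda>(s, as). s(ys [\<mapsto>] as)) J) (xs @ ys) f =
           measure_pmf.prob J ({s. \<forall>v\<in>set xs. s v = Some (f v)} \<times> {map f ys})"
    and "wt (map_pmf (\<lambda>(s, as). s(ys [\<mapsto>] as)) J) xs f =
           measure_pmf.prob J ({s. \<forall>v\<in>set xs. s v = Some (f v)} \<times> UNIV)"
    and "wt (map_pmf (\<lambda>(s, as). s(ys [\<mapsto>] as)) J) ys f =
           measure_pmf.prob J (UNIV \<times> {map f ys})"
proof -
  have xs: "(s(ys [\<mapsto>] as)) v = s v" if "v \<in> set xs" for s as v
    using assms(2) that by (metis disjoint_iff map_upds_apply_nontin)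
  have ys: "(\<forall>v\<in>set ys. (s(ys [\<mapsto>] as)) v = Some (f v)) \<longleftrightarrow> as = map f ys"
    if "(s, as) \<in> set_pmf J" for s as
    using assms(1,3) that by (auto intro!: map_upds_eq_Some_iff)
  show "wt (map_pmf (\<lambda>(s, as). s(ys [\<mapsto>] as)) J) (xs @ ys) f =
           measure_pmf.prob J ({s. \<forall>v\<in>set xs. s v = Some (f v)} \<times> {map f ys})"
    unfolding wt_def measure_map_pmf
    by (rule measure_pmf_prob_cong) (force simp: ball_Un xs ys)
  show "wt (map_pmf (\<lambda>(s, as). s(ys [\<mapsto>] as)) J) xs f =
           measure_pmf.prob J ({s. \<forall>v\<in>set xs. s v = Some (f v)} \<times> UNIV)"
    unfolding wt_def measure_map_pmf
    by (rule measure_pmf_prob_cong) (auto simp: xs)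
  show "wt (map_pmf (\<lambda>(s, as). s(ys [\<mapsto>] as)) J) ys f =
           measure_pmf.prob J (UNIV \<times> {map f ys})"
    unfolding wt_def measure_map_pmf
    by (rule measure_pmf_prob_cong) (force simp: ys)
qed

lemma sat_Indep_Nil_iff:
  "sat A I D X (Indep [] xs ys) \<longleftrightarrow>
   (\<forall>f. (\<forall>v. f v \<in> A) \<longrightarrow> wt X xs f * wt X ys f = wt X (xs @ ys) f)"
  by (simp add: wt_def)

lemma sat_team_subst_Indep:
  assumes "distinct ys" and "set ys \<inter> set xs = {}" and "distr_on A (length ys) d"
  shows "sat A I D (team_subst X ys d) (Indep [] xs ys)"
proof -
  have len: "\<forall>p\<in>set_pmf (pair_pmf X d). length (snd p) = length ys"
    using assms(3) by (auto simp: distr_on_def)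
  show ?thesis
    unfolding sat_Indep_Nil_iff team_subst_eq_map_pmf wt_map_upds_pmf[OF assms(1,2) len]
    by (simp add: measure_pair_pmf_Times)
qed

text \<open>On the support of \<open>X\<close> the assignment is determined by its values on \<open>xs\<close>, so the
  weights of \<open>xs\<close>, \<open>ys\<close> and \<open>xs @ ys\<close> are the marginals and the point masses of the joint
  law of assignment and drawn list; independence thus makes this joint law a product.\<close>

lemma kernel_subst_eq_team_subst_if_Indep:
  assumes X: "team_on A (set xs) X" and "A \<noteq> {}"
    and ys: "distinct ys" "set ys \<inter> set xs = {}"
    and K: "\<forall>s\<in>set_pmf X. distr_on A (length ys) (K s)"
    and indep: "sat A I D (kernel_subst X ys K) (Indep [] xs ys)"
  shows "kernel_subst X ys K = team_subst X ys (bind_pmf X K)"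
proof -
  define J where "J = bind_pmf X (\<lambda>s. map_pmf (Pair s) (K s))"
  define d where "d = bind_pmf X K"
  have fst_J: "map_pmf fst J = X" and snd_J: "map_pmf snd J = d"
    by (simp_all add: J_def d_def map_bind_pmf map_pmf_comp bind_return_pmf')
  have set_J: "fst p \<in> set_pmf X \<and> snd p \<in> set_pmf (K (fst p))" if "p \<in> set_pmf J" for p
    using that by (auto simp: J_def)
  have len_J: "\<forall>p\<in>set_pmf J. length (snd p) = length ys"
    using K set_J by (auto simp: distr_on_def)
  note wt_T = wt_map_upds_pmf[OF ys len_J, folded kernel_subst_eq_map_pmf[of X ys K, folded J_def]]
  have "J = pair_pmf X d"
  proof (rule eq_pair_pmfI[OF fst_J snd_J])
    fix s as assume s: "s \<in> set_pmf X" and as: "as \<in> set_pmf d"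
    obtain a0 where a0: "a0 \<in> A"
      using \<open>A \<noteq> {}\<close> by blast
    have as_A: "set as \<subseteq> A" and len: "length as = length ys"
      using K as by (auto simp: d_def distr_on_def)
    have dom_s: "dom s = set xs" and ran_s: "ran s \<subseteq> A"
      using X s by (auto simp: team_on_def)
    then have "set ys \<inter> dom s = {}"
      using ys(2) by simp
    then obtain f where fA: "\<forall>v. f v \<in> A" and fs: "\<forall>v\<in>dom s. s v = Some (f v)"
      and f_as: "map f ys = as"
      using ex_valuation_extending[OF a0 ran_s as_A ys(1) len] by blast
    have only_s: "fst p \<in> {t. \<forall>v\<in>set xs. t v = Some (f v)} \<longleftrightarrow> fst p \<in> {s}"
      if "p \<in> set_pmf J" for p
      using team_on_eq_if_agree[OF X s, of "fst p"] set_J[OF that] fs dom_s by auto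
    have rect: "measure_pmf.prob J ({t. \<forall>v\<in>set xs. t v = Some (f v)} \<times> B) =
                measure_pmf.prob J ({s} \<times> B)" for B
      by (rule measure_pmf_prob_cong) (use only_s in force)
    have "wt (kernel_subst X ys K) (xs @ ys) f = measure_pmf.prob J {(s, as)}"
      by (simp add: wt_T(1) rect f_as)
    also have "\<dots> = pmf J (s, as)"
      by (rule measure_pmf_single)
    finally have wt_xs_ys: "wt (kernel_subst X ys K) (xs @ ys) f = pmf J (s, as)" .
    have "wt (kernel_subst X ys K) xs f = measure_pmf.prob (map_pmf fst J) {s}"
      by (simp add: wt_T(2) rect vimage_fst)
    then have wt_xs: "wt (kernel_subst X ys K) xs f = pmf X s"
      by (simp add: fst_J measure_pmf_single)
    have "wt (kernel_subst X ys K) ys f = measure_pmf.prob (map_pmf snd J) {as}"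
      by (simp add: wt_T(3) f_as vimage_snd)
    then have wt_ys: "wt (kernel_subst X ys K) ys f = pmf d as"
      by (simp add: snd_J measure_pmf_single)
    have "wt (kernel_subst X ys K) xs f * wt (kernel_subst X ys K) ys f =
                   wt (kernel_subst X ys K) (xs @ ys) f"
      using indep fA unfolding sat_Indep_Nil_iff by blast
    then show "pmf J (s, as) = pmf X s * pmf d as"
      by (simp add: wt_xs_ys wt_xs wt_ys)
  qed
  then show ?thesis
    by (simp add: kernel_subst_eq_map_pmf team_subst_eq_map_pmf flip: J_def d_def)
qed

lemma sat_Exs_cong:
  assumes "\<And>D X. sat A I D X \<phi> \<longleftrightarrow> sat A I D X \<phi>'"
  shows "sat A I D X (Exs ys \<phi>) \<longleftrightarrow> sat A I D X (Exs ys \<phi>')"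
  using assms by (induction ys arbitrary: D X) (simp_all add: Exs_def)

lemma sat_ForallStars_iff:
  "sat A I D X (ForallStars ys \<theta>) \<longleftrightarrow> \<not> sat A I D X (Exs ys (Tilde \<theta>))"
  by (induction ys arbitrary: D X) (simp_all add: ForallStars_def ForallStar_def Exs_def)

lemma sat_phi_all_iff_not_phi_ex:
  "sat A I D X (phi_all xs ys \<psi>) \<longleftrightarrow> \<not> sat A I D X (phi_ex xs ys (Tilde \<psi>))"
  unfolding phi_all_def phi_ex_def sat_ForallStars_iff
  by (subst sat_Exs_cong[where \<phi>' = "And (Indep [] xs ys) (Tilde \<psi>)"])
    (simp_all only: ImpStar_def sat.simps(6) not_not)

lemma sat_phi_ex_iff:
  assumes "A \<noteq> {}" and "distinct ys" and "set ys \<inter> set xs = {}" and "team_on A (set xs) X"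
  shows "sat A I (set xs) X (phi_ex xs ys \<psi>) \<longleftrightarrow>
    (\<exists>d. distr_on A (length ys) d \<and> sat A I (set xs \<union> set ys) (team_subst X ys d) \<psi>)"
proof
  assume "sat A I (set xs) X (phi_ex xs ys \<psi>)"
  then obtain K where K: "\<forall>s\<in>set_pmf X. distr_on A (length ys) (K s)"
    and indep: "sat A I (set xs \<union> set ys) (kernel_subst X ys K) (Indep [] xs ys)"
    and \<psi>: "sat A I (set xs \<union> set ys) (kernel_subst X ys K) \<psi>"
    unfolding phi_ex_def sat_Exs_iff_kernel[OF assms(2-4)] by auto
  have "kernel_subst X ys K = team_subst X ys (bind_pmf X K)"
    by (rule kernel_subst_eq_team_subst_if_Indep[OF assms(4,1-3) K indep])
  moreover have "distr_on A (length ys) (bind_pmf X K)"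
    using K by (auto simp: distr_on_def)
  ultimately show "\<exists>d. distr_on A (length ys) d \<and> sat A I (set xs \<union> set ys) (team_subst X ys d) \<psi>"
    using \<psi> by metis
next
  assume "\<exists>d. distr_on A (length ys) d \<and> sat A I (set xs \<union> set ys) (team_subst X ys d) \<psi>"
  then obtain d where d: "distr_on A (length ys) d"
    and \<psi>: "sat A I (set xs \<union> set ys) (team_subst X ys d) \<psi>"
    by blast
  have "sat A I (set xs \<union> set ys) (team_subst X ys d) (Indep [] xs ys)"
    by (rule sat_team_subst_Indep[OF assms(2,3) d])
  with d \<psi> show "sat A I (set xs) X (phi_ex xs ys \<psi>)"
    unfolding phi_ex_def sat_Exs_iff_kernel[OF assms(2-4)] team_subst_eq_kernel_subst
    by (intro exI[of _ "\<lambda>_. d"]) simp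
qed

theorem mainTheorem5:
  fixes A :: "'a set" and I :: "'r \<Rightarrow> 'a list \<Rightarrow> bool"
    and xs ys :: "'v list" and \<psi> :: "('v, 'r) fml" and X :: "('v, 'a) team"
  assumes "finite A" and "A \<noteq> {}"
    and "distinct ys" and "set ys \<inter> set xs = {}"
    and "fv \<psi> \<subseteq> set xs \<union> set ys"
    and "team_on A (set xs) X"
  shows "(sat A I (set xs) X (phi_ex xs ys \<psi>) \<longleftrightarrow>
            (\<exists>d. distr_on A (length ys) d \<and> sat A I (set xs \<union> set ys) (team_subst X ys d) \<psi>))
       \<and> (sat A I (set xs) X (phi_all xs ys \<psi>) \<longleftrightarrow>
            (\<forall>d. distr_on A (length ys) d \<longrightarrow> sat A I (set xs \<union> set ys) (team_subst X ys d) \<psi>))"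
proof
  note ex_iff = sat_phi_ex_iff[OF assms(2-4,6)]
  show "sat A I (set xs) X (phi_ex xs ys \<psi>) \<longleftrightarrow>
            (\<exists>d. distr_on A (length ys) d \<and> sat A I (set xs \<union> set ys) (team_subst X ys d) \<psi>)"
    by (rule ex_iff)
  show "sat A I (set xs) X (phi_all xs ys \<psi>) \<longleftrightarrow>
            (\<forall>d. distr_on A (length ys) d \<longrightarrow> sat A I (set xs \<union> set ys) (team_subst X ys d) \<psi>)"
    unfolding sat_phi_all_iff_not_phi_ex ex_iff by simp
qed

end
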